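(* Let $Q,M,B\in\mathbb{R}^{n\times n}$ be symmetric positive semidefinite, and let $\Pi\in\mathbb{R}^{n\times n}$ satisfy $Q-\Pi M^\dagger\Pi^\top\succeq0$ and $\Pi^\top=MM^\dagger\Pi^\top$. Then for all matrices $R,G\in\mathbb{R}^{n\times n}$, $$\operatorname{tr}\{QRR^\top+BMBGG^\top\}\ \ge\ 2\operatorname{tr}\{\Pi BGR^\top\}.$$
   Context: $M^\dagger$ denotes the Moore–Penrose pseudoinverse of $M$. *)

theory Defs
  imports "HOL-Analysis.Analysis"
begin

definition mtrace :: "real^'n^'n \<Rightarrow> real" where
  "mtrace A = (\<Sum>i\<in>UNIV. A $ i $ i)"

definition msym :: "real^'n^'n \<Rightarrow> bool" where
  "msym A \<longleftrightarrow> transpose A = A"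

definition psd :: "real^'n^'n \<Rightarrow> bool" where
  "psd A \<longleftrightarrow> msym A \<and> (\<forall>x. 0 \<le> x \<bullet> (A *v x))"

definition is_pinv :: "real^'n^'m \<Rightarrow> real^'m^'n \<Rightarrow> bool" where
  "is_pinv A X \<longleftrightarrow> A ** X ** A = A \<and> X ** A ** X = X \<and>
     transpose (A ** X) = A ** X \<and> transpose (X ** A) = X ** A"

(* Moore-Penrose pseudoinverse (exists and is unique) *)
definition pinv :: "real^'n^'m \<Rightarrow> real^'m^'n" where
  "pinv A = (THE X. is_pinv A X)"

end

theory Submission
  imports Defs
begin

(* With U = M\<^sup>\<dagger> \<Pi>\<^sup>T R and V = B G, the range condition \<Pi>\<^sup>T = M M\<^sup>\<dagger> \<Pi>\<^sup>T turns
   U\<^sup>T M U into R\<^sup>T \<Pi> M\<^sup>\<dagger> \<Pi>\<^sup>T R and U\<^sup>T M V into R\<^sup>T \<Pi> B G. Expanding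
   0 \<le> tr((U - V)\<^sup>T M (U - V)) and adding 0 \<le> tr(R\<^sup>T (Q - \<Pi> M\<^sup>\<dagger> \<Pi>\<^sup>T) R) gives the
   inequality. No Moore-Penrose property of M\<^sup>\<dagger> beyond the range condition is
   needed, so the argument works for any matrix X in its place. *)

lemma mtrace_eq_trace: "mtrace A = trace A"
  by (simp add: mtrace_def trace_def)

lemma trace_transpose: "trace (transpose (A::'a::semiring_1^'n^'n)) = trace A"
  by (simp add: trace_def transpose_def)

lemma matrix_transpose_diff: "transpose ((A::'a::ring_1^'n^'m) - B) = transpose A - transpose B"
  by (simp add: transpose_def vec_eq_iff)

lemma matrix_diff_ldistrib: "(A::'a::ring_1^'n^'m) ** ((B::'a^'p^'n) - C) = A ** B - A ** C"
  by (simp add: matrix_matrix_mult_def vec_eq_iff sum_subtractf algebra_simps)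

lemma matrix_diff_rdistrib: "((A::'a::ring_1^'n^'m) - B) ** (C::'a^'p^'n) = A ** C - B ** C"
  by (simp add: matrix_matrix_mult_def vec_eq_iff sum_subtractf algebra_simps)

lemma transpose_mult_mult_diag:
  "(transpose R ** A ** R) $ j $ j = column j R \<bullet> (A *v column j (R::real^'m^'n))"
proof -
  have "(transpose R ** A ** R) $ j $ j = (\<Sum>k\<in>UNIV. R $ k $ j * (A ** R) $ k $ j)"
    unfolding matrix_mul_assoc[symmetric] by (simp add: matrix_matrix_mult_def transpose_def)
  also have "\<dots> = (\<Sum>k\<in>UNIV. R $ k $ j * (A *v column j R) $ k)"
    by (simp add: matrix_matrix_mult_def matrix_vector_mult_def column_def)
  finally show ?thesis by (simp add: inner_vec_def column_def)
qed

lemma psd_trace_congruence_nonneg: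
  assumes "psd A"
  shows "0 \<le> trace (transpose R ** A ** R)"
  using assms by (simp add: psd_def trace_def transpose_mult_mult_diag sum_nonneg)

lemma psd_trace_cross_le:
  assumes "psd M"
  shows "2 * trace (transpose U ** M ** V)
           \<le> trace (transpose U ** M ** U) + trace (transpose V ** M ** V)"
proof -
  have "transpose M = M" using assms by (simp add: psd_def msym_def)
  then have "transpose (transpose U ** M ** V) = transpose V ** M ** U"
    by (simp add: matrix_transpose_mul matrix_mul_assoc)
  then have swap: "trace (transpose V ** M ** U) = trace (transpose U ** M ** V)"
    by (metis trace_transpose)
  have "0 \<le> trace (transpose (U - V) ** M ** (U - V))"
    using assms by (rule psd_trace_congruence_nonneg)
  also have "transpose (U - V) ** M ** (U - V) = transpose U ** M ** U - transpose U ** M ** V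
      - (transpose V ** M ** U - transpose V ** M ** V)"
    by (simp add: matrix_transpose_diff matrix_diff_ldistrib matrix_diff_rdistrib)
  finally show ?thesis by (simp add: trace_sub swap)
qed

lemma trace_cross_le_of_range_condition:
  fixes Q M B P X R G :: "real^'n^'n"
  assumes "psd M" and "msym B"
    and "psd (Q - P ** X ** transpose P)"
    and range: "transpose P = M ** X ** transpose P"
  shows "2 * trace (P ** B ** G ** transpose R)
           \<le> trace (Q ** R ** transpose R) + trace (B ** M ** B ** G ** transpose G)"
proof -
  define U where "U = X ** transpose P ** R"
  define V where "V = B ** G"
  have M_sym: "transpose M = M" and B_sym: "transpose B = B"
    using assms(1,2) by (simp_all add: psd_def msym_def)
  have range': "P ** transpose X ** M = P"
  proof -
    have "P ** transpose X ** M = transpose (M ** X ** transpose P)"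
      using M_sym by (simp add: matrix_transpose_mul matrix_mul_assoc)
    then show ?thesis by (simp only: range[symmetric] transpose_transpose)
  qed
  have UMU: "trace (transpose U ** M ** U) = trace (P ** X ** transpose P ** R ** transpose R)"
  proof -
    have "transpose U ** M ** U = transpose R ** P ** transpose X ** (M ** X ** transpose P) ** R"
      by (simp add: U_def matrix_transpose_mul matrix_mul_assoc)
    also have "\<dots> = transpose R ** P ** transpose X ** transpose P ** R"
      by (simp only: range[symmetric])
    also have "\<dots> = transpose (transpose R ** (P ** X ** transpose P ** R))"
      by (simp add: matrix_transpose_mul matrix_mul_assoc)
    finally show ?thesis by (simp add: trace_transpose trace_mul_sym[of "transpose R"])
  qed
  have UMV: "trace (transpose U ** M ** V) = trace (P ** B ** G ** transpose R)"
  proof -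
    have "transpose U ** M ** V = transpose R ** (P ** transpose X ** M) ** B ** G"
      by (simp add: U_def V_def matrix_transpose_mul matrix_mul_assoc)
    also have "\<dots> = transpose R ** (P ** B ** G)"
      by (simp only: range' matrix_mul_assoc)
    finally show ?thesis by (simp add: trace_mul_sym[of "transpose R"])
  qed
  have VMV: "trace (transpose V ** M ** V) = trace (B ** M ** B ** G ** transpose G)"
  proof -
    have "transpose V ** M ** V = transpose G ** (B ** M ** B ** G)"
      by (simp add: V_def B_sym matrix_transpose_mul matrix_mul_assoc)
    then show ?thesis by (simp add: trace_mul_sym[of "transpose G"])
  qed
  have "0 \<le> trace (transpose R ** (Q - P ** X ** transpose P) ** R)"
    using assms(3) by (rule psd_trace_congruence_nonneg)
  also have "\<dots> = trace ((Q - P ** X ** transpose P) ** R ** transpose R)"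
    by (simp only: matrix_mul_assoc[symmetric] trace_mul_sym[of "transpose R"])
  also have "\<dots> = trace (Q ** R ** transpose R) - trace (P ** X ** transpose P ** R ** transpose R)"
    by (simp add: matrix_diff_rdistrib trace_sub)
  finally show ?thesis
    using psd_trace_cross_le[OF assms(1), of U V] UMU UMV VMV by simp
qed

theorem lemma2:
  fixes Q M B P R G :: "real^'n^'n"
  assumes "psd Q" and "psd M" and "psd B"
    and "psd (Q - P ** pinv M ** transpose P)"
    and "transpose P = M ** pinv M ** transpose P"
  shows "mtrace (Q ** R ** transpose R + B ** M ** B ** G ** transpose G)
           \<ge> 2 * mtrace (P ** B ** G ** transpose R)"
proof -
  have "msym B" using assms(3) by (simp add: psd_def)
  with assms(2,4,5) show ?thesis
    by (simp add: mtrace_eq_trace trace_add trace_cross_le_of_range_condition)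
qed

end
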